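(* Let $p$ be a prime, let $n\geqslant 2$ be an integer, let $m\geqslant 1$ be an integer and let $k\geqslant 2$ be an integer not divisible by $p$. For positive integers $a,r$ let $w(a,r)=\frac{1}{r}\sum_{d\mid r}\mu(d)\,a^{r/d}$, where $\mu$ is the Möbius function. For $i=0,1,\dots,m$ define $$a_i = \frac{w(n,p^{m-i}k)^{p^i}}{p^i\, w(n,p^mk)}.$$ Then: (i) for $i=2,3,\dots,m-1$, we have $a_i/a_{i-1}\leqslant 1$; (ii) $a_1 \leqslant 2/(p^{m-1}k)^{p-1}$ and $a_m \leqslant 2/k^{p^m-1}$. *)

theory Defs
  imports Complex_Main "HOL-Computational_Algebra.Squarefree"
begin

definition moebius_mu :: "nat \<Rightarrow> int" where
  "moebius_mu d = (if squarefree d then (-1) ^ card (prime_factors d) else 0)"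

definition necklace_w :: "nat \<Rightarrow> nat \<Rightarrow> real" where
  "necklace_w a r = (1 / real r) * (\<Sum>d | d dvd r. real_of_int (moebius_mu d) * real a ^ (r div d))"

definition coeff_a :: "nat \<Rightarrow> nat \<Rightarrow> nat \<Rightarrow> nat \<Rightarrow> nat \<Rightarrow> real" where
  "coeff_a p n m k i =
     necklace_w n (p ^ (m - i) * k) ^ (p ^ i) / (real p ^ i * necklace_w n (p ^ m * k))"

end

theory Submission imports Defs begin

text \<open>
  Write \<open>S(n,r) = \<Sum>\<^sub>d\<^sub>|\<^sub>r \<mu>(d) n\<^bsup>r/d\<^esup>\<close>, so that \<open>w(n,r) = S(n,r)/r\<close>. If \<open>q\<close> is the least prime
  divisor of \<open>r\<close>, then \<open>S(n,r) = n\<^sup>r - n\<^bsup>r/q\<^esup> + T\<close>, where the exponents \<open>r/d\<close> in \<open>T\<close> are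
  distinct and smaller than \<open>r/q\<close>, so \<open>|T| < n\<^bsup>r/q\<^esup>\<close>. Hence
  \<open>n\<^sup>r/(2r) \<le> w(n,r) \<le> n\<^sup>r/r\<close> for \<open>r \<ge> 3\<close>, and therefore
  \<open>w(n,L)\<^sup>P \<le> (n\<^sup>L/L)\<^sup>P = n\<^bsup>PL\<^esup>/L\<^sup>P \<le> (2P/L\<^bsup>P-1\<^esup>) w(n,PL)\<close>.
  With \<open>P = p\<close> this gives \<open>w(n,L)\<^sup>p \<le> w(n,pL)\<close> as soon as \<open>L \<ge> 2p\<close>, which makes
  \<open>a\<^sub>i\<close> decreasing; with \<open>P = p\<close>, \<open>L = p\<^bsup>m-1\<^esup>k\<close> and with \<open>P = p\<^sup>m\<close>, \<open>L = k\<close> it gives the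
  two bounds of (ii).
\<close>

definition necklace_sum :: "nat \<Rightarrow> nat \<Rightarrow> real" where
  "necklace_sum a r = (\<Sum>d | d dvd r. real_of_int (moebius_mu d) * real a ^ (r div d))"

lemma necklace_w_eq_sum: "necklace_w a r = necklace_sum a r / real r"
  by (simp add: necklace_w_def necklace_sum_def)

lemma necklace_sum_Suc_0 [simp]: "necklace_sum a (Suc 0) = real a"
proof -
  have "{d. d dvd Suc 0} = {Suc 0}"
    by auto
  then show ?thesis
    by (simp add: necklace_sum_def moebius_mu_def)
qed

lemma moebius_mu_1: "moebius_mu 1 = 1"
  by (simp add: moebius_mu_def)

lemma moebius_mu_prime: "prime q \<Longrightarrow> moebius_mu q = -1"
  by (simp add: moebius_mu_def squarefree_prime prime_prime_factors)

lemma abs_moebius_mu_le: "\<bar>moebius_mu d\<bar> \<le> 1"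
  by (simp add: moebius_mu_def)

lemma sum_power_lessThan_le:
  fixes x :: real
  assumes "x \<ge> 2"
  shows "(\<Sum>j<J. x ^ j) \<le> x ^ J - 1"
proof (induction J)
  case (Suc J)
  have "x ^ Suc J \<ge> 2 * x ^ J"
    using assms by (simp add: mult_right_mono)
  with Suc show ?case by simp
qed simp

lemma least_prime_divisor:
  fixes r :: nat
  assumes "r \<ge> 2"
  obtains q where "prime q" "q dvd r" "\<And>d. d dvd r \<Longrightarrow> 1 < d \<Longrightarrow> q \<le> d"
proof
  let ?P = "prime_factors r"
  have ne: "?P \<noteq> {}"
    using assms by (simp add: prime_factorization_empty_iff)
  show "prime (Min ?P)" "Min ?P dvd r"
    using Min_in[OF finite_set_mset ne] by auto
  fix d assume "d dvd r" "1 < d"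
  then obtain p where "prime p" "p dvd d"
    using prime_factor_nat[of d] by auto
  with \<open>d dvd r\<close> assms have "p \<in> ?P"
    by (auto intro: prime_factorsI dvd_trans)
  then have "Min ?P \<le> p"
    by (rule Min_le[OF finite_set_mset])
  also have "p \<le> d"
    using \<open>p dvd d\<close> \<open>1 < d\<close> by (intro dvd_imp_le) auto
  finally show "Min ?P \<le> d" .
qed

lemma sum_power_quotients_le:
  fixes x :: real and r q :: nat
  assumes "x \<ge> 2" and "r > 0" and "q dvd r" and D: "D \<subseteq> {d. d dvd r \<and> q < d}"
  shows "(\<Sum>d\<in>D. x ^ (r div d)) \<le> x ^ (r div q) - 1"
proof -
  have inj: "inj_on (\<lambda>d. r div d) D"
  proof (rule inj_onI)
    fix a b assume "a \<in> D" "b \<in> D" "r div a = r div b"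
    have "r = a * (r div a)"
      using \<open>a \<in> D\<close> D by auto
    moreover have "r = b * (r div a)"
      using \<open>b \<in> D\<close> D unfolding \<open>r div a = r div b\<close> by auto
    moreover have "r div a \<noteq> 0"
      using \<open>r = a * (r div a)\<close> \<open>r > 0\<close> by (metis mult_0_right less_irrefl)
    ultimately show "a = b"
      by (metis mult_right_cancel)
  qed
  have img: "(\<lambda>d. r div d) ` D \<subseteq> {..<r div q}"
  proof clarify
    fix d assume "d \<in> D"
    then have "q < d" and "r = d * (r div d)"
      using D by auto
    show "r div d < r div q"
    proof (rule ccontr)
      assume "\<not> r div d < r div q"
      then have "q * (r div q) < d * (r div d)"
        using \<open>q < d\<close> \<open>q dvd r\<close> \<open>r > 0\<close> by (intro mult_less_le_imp_less) auto
      then show False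
        using \<open>q dvd r\<close> \<open>r = d * (r div d)\<close> by simp
    qed
  qed
  have "(\<Sum>d\<in>D. x ^ (r div d)) = (\<Sum>j\<in>(\<lambda>d. r div d) ` D. x ^ j)"
    by (simp add: sum.reindex[OF inj])
  also have "\<dots> \<le> (\<Sum>j<r div q. x ^ j)"
    using img \<open>x \<ge> 2\<close> by (intro sum_mono2) auto
  also have "\<dots> \<le> x ^ (r div q) - 1"
    using \<open>x \<ge> 2\<close> by (rule sum_power_lessThan_le)
  finally show ?thesis .
qed

lemma necklace_sum_approx:
  fixes n r q :: nat
  assumes n: "n \<ge> 2" and "r > 0" and q: "prime q" "q dvd r"
    and least: "\<And>d. d dvd r \<Longrightarrow> 1 < d \<Longrightarrow> q \<le> d"
  shows "\<bar>necklace_sum n r - (real n ^ r - real n ^ (r div q))\<bar> < real n ^ (r div q)"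
proof -
  define D where "D = {d. d dvd r} - {1, q}"
  define f where "f d = real_of_int (moebius_mu d) * real n ^ (r div d)" for d
  have D: "D \<subseteq> {d. d dvd r \<and> q < d}"
  proof clarify
    fix d assume "d \<in> D"
    then have "d dvd r" and "d \<noteq> 1" and "d \<noteq> q"
      by (auto simp: D_def)
    moreover have "d \<noteq> 0"
      using \<open>d dvd r\<close> \<open>r > 0\<close> by auto
    ultimately show "d dvd r \<and> q < d"
      using least[of d] by auto
  qed
  have "finite D"
    using \<open>r > 0\<close> by (simp add: D_def)
  moreover have "{d. d dvd r} = insert 1 (insert q D)"
    using q(2) by (auto simp: D_def)
  moreover have "q \<noteq> 1" and "1 \<notin> D" and "q \<notin> D"
    using q(1) by (auto simp: D_def)
  ultimately have "necklace_sum n r = f 1 + f q + sum f D"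
    unfolding necklace_sum_def f_def[symmetric] by simp
  also have "f 1 + f q = real n ^ r - real n ^ (r div q)"
    by (simp add: f_def moebius_mu_1 moebius_mu_prime[OF q(1)] del: One_nat_def)
  finally have split: "necklace_sum n r - (real n ^ r - real n ^ (r div q)) = sum f D"
    by simp
  have "\<bar>sum f D\<bar> \<le> (\<Sum>d\<in>D. real n ^ (r div d))"
    using abs_moebius_mu_le
    by (intro order.trans[OF sum_abs] sum_mono)
       (auto simp: f_def abs_mult mult_left_le_one_le of_int_abs[symmetric] simp del: of_int_abs)
  also have "\<dots> \<le> real n ^ (r div q) - 1"
    using n \<open>r > 0\<close> q(2) D by (intro sum_power_quotients_le) auto
  finally show ?thesis
    using split by simp
qed

lemma necklace_sum_bounds:
  fixes n r :: nat
  assumes "n \<ge> 2" and "r \<ge> 2"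
  shows "necklace_sum n r < real n ^ r"
    and "real n ^ r - 2 * real n ^ (r div 2) < necklace_sum n r"
proof -
  obtain q where q: "prime q" "q dvd r" "\<And>d. d dvd r \<Longrightarrow> 1 < d \<Longrightarrow> q \<le> d"
    using least_prime_divisor[OF \<open>r \<ge> 2\<close>] by blast
  have approx: "\<bar>necklace_sum n r - (real n ^ r - real n ^ (r div q))\<bar> < real n ^ (r div q)"
    using assms q by (intro necklace_sum_approx) auto
  have "r div q \<le> r div 2"
    using prime_ge_2_nat[OF q(1)] by (intro div_le_mono2) auto
  then have "real n ^ (r div q) \<le> real n ^ (r div 2)"
    using assms by (intro power_increasing) auto
  with approx show "necklace_sum n r < real n ^ r"
    and "real n ^ r - 2 * real n ^ (r div 2) < necklace_sum n r"
    by (auto simp: abs_less_iff)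
qed

lemma power_half_exponent_le:
  fixes x :: real
  assumes "x \<ge> 2"
  shows "2 ^ (r - r div 2) * x ^ (r div 2) \<le> x ^ r"
proof -
  have "x ^ r = x ^ (r - r div 2) * x ^ (r div 2)"
    by (simp flip: power_add)
  moreover have "2 ^ (r - r div 2) \<le> x ^ (r - r div 2)"
    using assms by (intro power_mono) auto
  ultimately show ?thesis
    using assms by (simp add: mult_right_mono)
qed

lemma necklace_w_pos:
  assumes "n \<ge> 2" and "r \<ge> 1"
  shows "0 < necklace_w n r"
proof (cases "r = 1")
  case False
  have "2 ^ 1 * real n ^ (r div 2) \<le> 2 ^ (r - r div 2) * real n ^ (r div 2)"
    using assms by (intro mult_right_mono power_increasing) auto
  also have "\<dots> \<le> real n ^ r"
    using assms by (intro power_half_exponent_le) auto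
  finally have "0 < necklace_sum n r"
    using necklace_sum_bounds(2)[of n r] assms False by simp
  with assms show ?thesis
    by (simp add: necklace_w_eq_sum)
qed (use assms in \<open>simp add: necklace_w_eq_sum\<close>)

lemma necklace_w_le:
  assumes "n \<ge> 2"
  shows "necklace_w n r \<le> real n ^ r / real r"
proof -
  have "necklace_sum n r \<le> real n ^ r" if "r \<ge> 1"
    using that necklace_sum_bounds(1)[OF assms, of r] by (cases "r = 1") auto
  then show ?thesis
    by (cases "r = 0") (auto simp: necklace_w_eq_sum divide_right_mono)
qed

lemma necklace_w_ge:
  assumes "n \<ge> 2" and "r \<ge> 3"
  shows "real n ^ r / (2 * real r) \<le> necklace_w n r"
proof -
  have "2 ^ 2 * real n ^ (r div 2) \<le> 2 ^ (r - r div 2) * real n ^ (r div 2)"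
    using assms by (intro mult_right_mono power_increasing) auto
  also have "\<dots> \<le> real n ^ r"
    using assms by (intro power_half_exponent_le) auto
  finally have "real n ^ r / 2 \<le> necklace_sum n r"
    using necklace_sum_bounds(2)[of n r] assms by simp
  with assms show ?thesis
    by (simp add: necklace_w_eq_sum field_simps)
qed

lemma necklace_w_power_ratio_le:
  assumes n: "n \<ge> 2" and "L \<ge> 1" and "P \<ge> 1" and "P * L \<ge> 3"
  shows "necklace_w n L ^ P / (real P * necklace_w n (P * L)) \<le> 2 / real L ^ (P - 1)"
proof -
  have L: "real L > 0" and P: "real P > 0" and x: "real n ^ (P * L) > 0"
    using assms by auto
  have "necklace_w n L ^ P / (real P * necklace_w n (P * L))
      \<le> (real n ^ L / real L) ^ P / (real P * (real n ^ (P * L) / (2 * real (P * L))))"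
  proof (rule frac_le)
    show "necklace_w n L ^ P \<le> (real n ^ L / real L) ^ P"
      using assms by (intro power_mono necklace_w_le less_imp_le[OF necklace_w_pos]) auto
    show "real P * (real n ^ (P * L) / (2 * real (P * L))) \<le> real P * necklace_w n (P * L)"
      using assms by (intro mult_left_mono necklace_w_ge) auto
  qed (use L P x in auto)
  also have "\<dots> = 2 * real L / real L ^ P"
    using L P x by (simp add: power_divide field_simps flip: power_mult)
  also have "\<dots> = 2 / real L ^ (P - 1)"
    using L \<open>P \<ge> 1\<close> by (cases P) auto
  finally show ?thesis .
qed

lemma necklace_w_power_le:
  assumes "n \<ge> 2" and "P \<ge> 2" and "L \<ge> 2 * P"
  shows "necklace_w n L ^ P \<le> necklace_w n (P * L)"
proof -
  have w: "necklace_w n (P * L) > 0"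
    using assms by (intro necklace_w_pos) auto
  have "P * L \<ge> 2 * 4"
    using assms by (intro mult_le_mono) auto
  then have "necklace_w n L ^ P / (real P * necklace_w n (P * L)) \<le> 2 / real L ^ (P - 1)"
    using assms by (intro necklace_w_power_ratio_le) auto
  also have "\<dots> \<le> 1 / real P"
  proof -
    have "2 * real P \<le> real L ^ 1"
      using assms by simp
    also have "\<dots> \<le> real L ^ (P - 1)"
      using assms by (intro power_increasing) auto
    finally show ?thesis
      using assms by (simp add: field_simps)
  qed
  finally have "necklace_w n L ^ P / (real P * necklace_w n (P * L)) \<le> 1 / real P" .
  with w assms show ?thesis
    by (simp add: field_simps)
qed

lemma coeff_a_pos:
  assumes "p > 0" and "n \<ge> 2" and "k > 0"
  shows "0 < coeff_a p n m k i"
  using assms by (simp add: coeff_a_def necklace_w_pos Suc_le_eq)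

lemma coeff_a_Suc_le:
  assumes p: "p \<ge> 2" and n: "n \<ge> 2" and k: "k \<ge> 2" and "Suc i < m"
  shows "coeff_a p n m k (Suc i) \<le> coeff_a p n m k i"
proof -
  define L where "L = p ^ (m - Suc i) * k"
  define W where "W = necklace_w n (p ^ m * k)"
  have "m - i = Suc (m - Suc i)"
    using \<open>Suc i < m\<close> by simp
  then have pL: "p ^ (m - i) * k = p * L"
    by (simp add: L_def)
  have "p ^ 1 \<le> p ^ (m - Suc i)"
    using p \<open>Suc i < m\<close> by (intro power_increasing) auto
  then have "p * 2 \<le> L"
    unfolding L_def using k by (intro mult_le_mono) auto
  then have "necklace_w n L ^ p \<le> necklace_w n (p * L)"
    using n p by (intro necklace_w_power_le) simp_all
  moreover have "0 \<le> necklace_w n L ^ p"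
    using n p k by (simp add: L_def necklace_w_pos less_imp_le)
  ultimately have "(necklace_w n L ^ p) ^ (p ^ i) \<le> necklace_w n (p * L) ^ (p ^ i)"
    by (rule power_mono)
  then have num: "necklace_w n L ^ (p ^ Suc i) \<le> necklace_w n (p * L) ^ (p ^ i)"
    by (simp add: power_mult)
  have "coeff_a p n m k (Suc i) = necklace_w n L ^ (p ^ Suc i) / (real p ^ Suc i * W)"
    by (simp add: coeff_a_def L_def W_def)
  also have "\<dots> \<le> necklace_w n (p * L) ^ (p ^ i) / (real p ^ i * W)"
  proof (rule frac_le)
    show "real p ^ i * W \<le> real p ^ Suc i * W"
      using p n k by (simp add: W_def necklace_w_pos less_imp_le)
  qed (use num p n k in \<open>auto simp: W_def L_def necklace_w_pos less_imp_le\<close>)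
  also have "\<dots> = coeff_a p n m k i"
    by (simp add: coeff_a_def W_def pL)
  finally show ?thesis .
qed

theorem corollary2p4:
  fixes p n m k :: nat
  assumes "prime p" and "n \<ge> 2" and "m \<ge> 1" and "k \<ge> 2" and "\<not> p dvd k"
  shows "(\<forall>i\<in>{2..m-1}. coeff_a p n m k i / coeff_a p n m k (i - 1) \<le> 1)
       \<and> coeff_a p n m k 1 \<le> 2 / (real (p ^ (m - 1) * k)) ^ (p - 1)
       \<and> coeff_a p n m k m \<le> 2 / (real k) ^ (p ^ m - 1)"
proof (intro conjI ballI)
  have p: "p \<ge> 2"
    using \<open>prime p\<close> by (rule prime_ge_2_nat)
  have pm: "p ^ m = p * p ^ (m - 1)"
    using \<open>m \<ge> 1\<close> by (cases m) auto
  have "p \<le> p ^ m"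
    using p \<open>m \<ge> 1\<close> by (intro self_le_power) auto
  then have "p ^ m * k \<ge> 2 * 2"
    using p \<open>k \<ge> 2\<close> by (intro mult_le_mono) auto
  then show "coeff_a p n m k m \<le> 2 / real k ^ (p ^ m - 1)"
    using necklace_w_power_ratio_le[of n k "p ^ m"] assms p by (simp add: coeff_a_def)
  from \<open>p ^ m * k \<ge> 2 * 2\<close> show "coeff_a p n m k 1 \<le> 2 / real (p ^ (m - 1) * k) ^ (p - 1)"
    using necklace_w_power_ratio_le[of n "p ^ (m - 1) * k" p] assms p
    by (simp add: coeff_a_def pm mult.assoc)
  fix i assume "i \<in> {2..m-1}"
  then have "coeff_a p n m k (Suc (i - 1)) \<le> coeff_a p n m k (i - 1)"
    using p assms by (intro coeff_a_Suc_le) auto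
  moreover have "0 < coeff_a p n m k (i - 1)"
    using p assms by (intro coeff_a_pos) auto
  ultimately show "coeff_a p n m k i / coeff_a p n m k (i - 1) \<le> 1"
    using \<open>i \<in> {2..m-1}\<close> by simp
qed

end
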